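(* Let $n \geq 1$ and let $d_1, d_2, \ldots, d_n$ be positive integers. Then there exists a connected signed bipartite graph $G(U,V)$ whose signed degree set is $$S = \left\{ d_1,\ \sum_{i=1}^{2} d_i,\ \ldots,\ \sum_{i=1}^{n} d_i \right\}.$$
   Context: A signed bipartite graph $G(U,V)$ is a finite simple bipartite graph with bipartition $U, V$ (both nonempty, every edge joining a vertex of $U$ to a vertex of $V$) in which each edge is assigned a sign, positive or negative. The signed degree of a vertex $x$ is $\mathrm{sdeg}(x) = d^+(x) - d^-(x)$, where $d^+(x)$ (resp. $d^-(x)$) is the number of positive (resp. negative) edges incident with $x$. The signed degree set of $G(U,V)$ is the set of distinct signed degrees of its vertices. $G(U,V)$ is called connected if each vertex of $U$ is connected (by a path) to every vertex of $V$. *)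

theory Defs
  imports Main
begin

text \<open>A signed bipartite graph on parts U, V: the edge set E consists of pairs (u,v)
  with u in U and v in V (so the graph is simple: at most one edge per pair, no loops);
  pos e says whether edge e is positive (otherwise it is negative).\<close>

definition signed_bipartite_graph ::
  "'a set \<Rightarrow> 'a set \<Rightarrow> ('a \<times> 'a) set \<Rightarrow> (('a \<times> 'a) \<Rightarrow> bool) \<Rightarrow> bool" where
  "signed_bipartite_graph U V E pos \<longleftrightarrow>
     finite U \<and> finite V \<and> U \<noteq> {} \<and> V \<noteq> {} \<and> U \<inter> V = {} \<and> E \<subseteq> U \<times> V"

definition incident :: "('a \<times> 'a) set \<Rightarrow> 'a \<Rightarrow> ('a \<times> 'a) set" where
  "incident E x = {e \<in> E. fst e = x \<or> snd e = x}"

definition sdeg :: "('a \<times> 'a) set \<Rightarrow> (('a \<times> 'a) \<Rightarrow> bool) \<Rightarrow> 'a \<Rightarrow> int" where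
  "sdeg E pos x = int (card {e \<in> incident E x. pos e}) - int (card {e \<in> incident E x. \<not> pos e})"

definition signed_degree_set ::
  "'a set \<Rightarrow> 'a set \<Rightarrow> ('a \<times> 'a) set \<Rightarrow> (('a \<times> 'a) \<Rightarrow> bool) \<Rightarrow> int set" where
  "signed_degree_set U V E pos = sdeg E pos ` (U \<union> V)"

definition adjacent :: "('a \<times> 'a) set \<Rightarrow> 'a \<Rightarrow> 'a \<Rightarrow> bool" where
  "adjacent E x y \<longleftrightarrow> (x, y) \<in> E \<or> (y, x) \<in> E"

definition sb_connected :: "'a set \<Rightarrow> 'a set \<Rightarrow> ('a \<times> 'a) set \<Rightarrow> bool" where
  "sb_connected U V E \<longleftrightarrow> (\<forall>u\<in>U. \<forall>v\<in>V. (adjacent E)\<^sup>*\<^sup>* u v)"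

end

theory Submission
  imports Defs
begin

text \<open>Let \<open>s\<^sub>1 < \<dots> < s\<^sub>n\<close> be the partial sums of the \<open>d\<^sub>i\<close>, and give every
  \<open>a \<in> {1..s\<^sub>n}\<close> the block index \<open>r(a)\<close>, the least \<open>j\<close> with \<open>a \<le> s\<^sub>j\<close>. Take two copies of
  \<open>{1..s\<^sub>n}\<close> as the parts and join \<open>a\<close> to \<open>b\<close> by a positive edge iff \<open>r(a) + r(b) \<le> n + 1\<close>.
  The neighbourhood of \<open>a\<close> is then the initial segment \<open>{1..s\<^bsub>n+1-r(a)\<^esub>}\<close>, so the
  signed degrees are exactly \<open>s\<^sub>1, \<dots>, s\<^sub>n\<close>, each attained (by \<open>a = s\<^bsub>n+1-k\<^esub>\<close>). Vertex \<open>1\<close>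
  has block index \<open>1\<close> and is therefore adjacent to the whole other part, which makes the
  graph connected.\<close>

lemma strict_mono_on_partial_sums:
  fixes d :: "nat \<Rightarrow> 'a::ordered_cancel_comm_monoid_add"
  assumes pos: "\<And>i. 1 \<le> i \<Longrightarrow> i \<le> n \<Longrightarrow> d i > 0"
  shows "strict_mono_on {..n} (\<lambda>k. \<Sum>i = 1..k. d i)"
proof (rule strict_mono_onI)
  fix i j assume "i \<in> {..n}" "j \<in> {..n}" "i < j"
  moreover have "0 \<le> d k" if "k \<in> {1..j}" for k
    using pos[of k] that \<open>j \<in> {..n}\<close> by fastforce
  ultimately show "(\<Sum>k = 1..i. d k) < (\<Sum>k = 1..j. d k)"
    by (intro sum_strict_mono2[where b = j] pos) auto
qed

definition block_index :: "(nat \<Rightarrow> 'a::linorder) \<Rightarrow> 'a \<Rightarrow> nat" where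
  "block_index s x = (LEAST j. x \<le> s j)"

lemma block_index_le_iff:
  assumes "mono_on {..n} s" "x \<le> s n" "j \<le> n"
  shows "block_index s x \<le> j \<longleftrightarrow> x \<le> s j"
proof
  assume le: "block_index s x \<le> j"
  have "x \<le> s (block_index s x)"
    unfolding block_index_def by (rule LeastI[of _ n]) (fact assms(2))
  also have "\<dots> \<le> s j"
    using le assms(3) by (intro mono_onD[OF assms(1)]) auto
  finally show "x \<le> s j" .
next
  assume "x \<le> s j"
  then show "block_index s x \<le> j"
    unfolding block_index_def by (rule Least_le)
qed

lemma block_index_eqI:
  assumes "strict_mono_on {..n} s" "c \<le> n"
  shows "block_index s (s c) = c"
  unfolding block_index_def
proof (rule Least_equality)
  fix j assume "s c \<le> s j"
  then show "c \<le> j"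
    using strict_mono_onD[OF assms(1), of j c] assms(2) by (auto simp: not_le[symmetric])
qed simp

lemma block_index_bounds:
  fixes s :: "nat \<Rightarrow> int"
  assumes "strict_mono_on {..n} s" "s 0 = 0" "a \<in> {1..nat (s n)}"
  shows "block_index s (int a) \<in> {1..n}"
proof -
  have "int a \<le> s n" using assms(3) by auto
  note le_iff = block_index_le_iff[OF strict_mono_on_imp_mono_on[OF assms(1)] this]
  show ?thesis
    using le_iff[of n] le_iff[of 0] assms(2,3) by auto
qed

definition block_adjacent :: "(nat \<Rightarrow> int) \<Rightarrow> nat \<Rightarrow> nat \<Rightarrow> nat \<Rightarrow> bool" where
  "block_adjacent s n a b \<longleftrightarrow> block_index s (int a) + block_index s (int b) \<le> n + 1"

lemma symp_block_adjacent: "symp (block_adjacent s n)"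
  by (simp add: symp_def block_adjacent_def add.commute)

lemma block_adjacent_one:
  fixes s :: "nat \<Rightarrow> int"
  assumes "strict_mono_on {..n} s" "s 0 = 0" "b \<in> {1..nat (s n)}"
  shows "block_adjacent s n 1 b"
proof -
  have b: "block_index s (int b) \<in> {1..n}"
    using block_index_bounds[OF assms] .
  have "s 0 < s 1"
    using b by (intro strict_mono_onD[OF assms(1)]) auto
  moreover have "1 \<le> s n"
    using assms(3) by auto
  ultimately have "block_index s 1 \<le> 1"
    using b assms(2) by (subst block_index_le_iff[OF strict_mono_on_imp_mono_on[OF assms(1)]]) auto
  with b show ?thesis
    unfolding block_adjacent_def by simp
qed

lemma block_neighbourhood:
  assumes "strict_mono_on {..n} s" "s 0 = 0" "a \<in> {1..nat (s n)}"
  shows "{b \<in> {1..nat (s n)}. block_adjacent s n a b} = {1..nat (s (n + 1 - block_index s (int a)))}"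
proof -
  define m where "m = n + 1 - block_index s (int a)"
  have mono: "mono_on {..n} s" by (rule strict_mono_on_imp_mono_on) fact
  have m: "m \<le> n" "s 0 \<le> s m" "s m \<le> s n"
    using block_index_bounds[OF assms] by (auto simp: m_def intro!: mono_onD[OF mono])
  have "block_adjacent s n a b \<longleftrightarrow> int b \<le> s m" if b: "b \<in> {1..nat (s n)}" for b
  proof -
    have "block_adjacent s n a b \<longleftrightarrow> block_index s (int b) \<le> m"
      using block_index_bounds[OF assms] unfolding block_adjacent_def m_def by auto
    also have "\<dots> \<longleftrightarrow> int b \<le> s m"
      using b by (intro block_index_le_iff[OF mono _ m(1)]) auto
    finally show ?thesis .
  qed
  then show ?thesis
    using m assms(2) unfolding m_def[symmetric] by auto
qed

lemma block_degrees:
  fixes s :: "nat \<Rightarrow> int"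
  assumes "strict_mono_on {..n} s" "s 0 = 0"
  shows "(\<lambda>a. int (card {b \<in> {1..nat (s n)}. block_adjacent s n a b})) ` {1..nat (s n)} = s ` {1..n}"
    (is "?deg ` ?A = _")
proof -
  have mono: "mono_on {..n} s" by (rule strict_mono_on_imp_mono_on) fact
  have nonneg: "0 \<le> s k" if "k \<le> n" for k
    using mono_onD[OF mono, of 0 k] that assms(2) by simp
  have deg: "?deg a = s (n + 1 - block_index s (int a))" if "a \<in> ?A" for a
  proof -
    have "n + 1 - block_index s (int a) \<le> n"
      using block_index_bounds[OF assms that] by auto
    then show ?thesis
      using block_neighbourhood[OF assms that] nonneg by simp
  qed
  show ?thesis
  proof (intro equalityI subsetI)
    fix x assume "x \<in> ?deg ` ?A"
    then obtain a where "a \<in> ?A" "x = ?deg a" by blast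
    with deg block_index_bounds[OF assms this(1)] show "x \<in> s ` {1..n}" by force
  next
    fix x assume "x \<in> s ` {1..n}"
    then obtain k where k: "k \<in> {1..n}" "x = s k" by blast
    define a where "a = nat (s (n + 1 - k))"
    have "s 0 < s (n + 1 - k)" "s (n + 1 - k) \<le> s n"
      using k(1) by (auto intro!: strict_mono_onD[OF assms(1)] mono_onD[OF mono])
    then have a: "a \<in> ?A" "int a = s (n + 1 - k)"
      using assms(2) by (auto simp: a_def)
    have "?deg a = x"
      using deg[OF a(1)] a(2) block_index_eqI[OF assms(1), of "n + 1 - k"] k by auto
    with a(1) show "x \<in> ?deg ` ?A" by blast
  qed
qed

text \<open>Bipartite double cover of the graph \<open>(A, R)\<close>: the two copies of \<open>A\<close> are encoded as the
  even numbers \<open>2 * a\<close> and the odd numbers \<open>2 * b + 1\<close>, since both parts must be sets of naturals.\<close>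

definition double_cover_edges :: "nat set \<Rightarrow> (nat \<Rightarrow> nat \<Rightarrow> bool) \<Rightarrow> (nat \<times> nat) set" where
  "double_cover_edges A R = {(2 * a, 2 * b + 1) | a b. a \<in> A \<and> b \<in> A \<and> R a b}"

lemma signed_bipartite_graph_double_cover:
  assumes "finite A" "A \<noteq> {}"
  shows "signed_bipartite_graph ((\<lambda>a. 2 * a) ` A) ((\<lambda>b. 2 * b + 1) ` A) (double_cover_edges A R) pos"
proof -
  have "2 * a \<noteq> 2 * b + 1" for a b :: nat by presburger
  then show ?thesis
    using assms unfolding signed_bipartite_graph_def double_cover_edges_def by auto
qed

lemma incident_double_cover_even:
  assumes "a \<in> A"
  shows "incident (double_cover_edges A R) (2 * a) = (\<lambda>b. (2 * a, 2 * b + 1)) ` {b \<in> A. R a b}"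
proof -
  have "2 * b + 1 \<noteq> 2 * a" for b :: nat by presburger
  then show ?thesis
    using assms unfolding incident_def double_cover_edges_def by auto
qed

lemma incident_double_cover_odd:
  assumes "b \<in> A"
  shows "incident (double_cover_edges A R) (2 * b + 1) = (\<lambda>a. (2 * a, 2 * b + 1)) ` {a \<in> A. R a b}"
proof -
  have "2 * a \<noteq> 2 * b + 1" for a :: nat by presburger
  then show ?thesis
    using assms unfolding incident_def double_cover_edges_def by auto
qed

lemma sdeg_all_positive: "sdeg E (\<lambda>_. True) x = int (card (incident E x))"
  by (simp add: sdeg_def)

lemma signed_degree_set_double_cover:
  assumes "symp R"
  shows "signed_degree_set ((\<lambda>a. 2 * a) ` A) ((\<lambda>b. 2 * b + 1) ` A) (double_cover_edges A R) (\<lambda>_. True)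
    = (\<lambda>a. int (card {b \<in> A. R a b})) ` A"
proof -
  have "sdeg (double_cover_edges A R) (\<lambda>_. True) (2 * a) = int (card {b \<in> A. R a b})"
    if "a \<in> A" for a
    by (simp add: sdeg_all_positive incident_double_cover_even[OF that] card_image inj_on_def)
  moreover have "sdeg (double_cover_edges A R) (\<lambda>_. True) (2 * b + 1) = int (card {a \<in> A. R b a})"
    if "b \<in> A" for b
  proof -
    have "{a \<in> A. R a b} = {a \<in> A. R b a}"
      using sympD[OF assms] by blast
    then show ?thesis
      unfolding sdeg_all_positive incident_double_cover_odd[OF that]
      by (simp add: card_image inj_on_def)
  qed
  ultimately show ?thesis
    unfolding signed_degree_set_def image_Un image_image by auto
qed

lemma sb_connected_double_cover:
  assumes "symp R" "c \<in> A" "\<And>b. b \<in> A \<Longrightarrow> R c b"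
  shows "sb_connected ((\<lambda>a. 2 * a) ` A) ((\<lambda>b. 2 * b + 1) ` A) (double_cover_edges A R)"
  unfolding sb_connected_def
proof (intro ballI)
  fix u v assume "u \<in> (\<lambda>a. 2 * a) ` A" "v \<in> (\<lambda>b. 2 * b + 1) ` A"
  then obtain a b where a: "a \<in> A" "u = 2 * a" and b: "b \<in> A" "v = 2 * b + 1"
    by blast
  let ?adj = "adjacent (double_cover_edges A R)"
  have "?adj u (2 * c + 1)" "?adj (2 * c + 1) (2 * c)" "?adj (2 * c) v"
    using a b assms sympD[OF assms(1)] unfolding adjacent_def double_cover_edges_def by blast+
  then show "?adj\<^sup>*\<^sup>* u v"
    by (meson r_into_rtranclp rtranclp_trans)
qed

theorem theorem2p1:
  fixes n :: nat and d :: "nat \<Rightarrow> int"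
  assumes "n \<ge> 1" and "\<And>i. 1 \<le> i \<Longrightarrow> i \<le> n \<Longrightarrow> d i > 0"
  shows "\<exists>(U :: nat set) V E pos.
           signed_bipartite_graph U V E pos \<and> sb_connected U V E \<and>
           signed_degree_set U V E pos = {(\<Sum>i = 1..k. d i) | k. 1 \<le> k \<and> k \<le> n}"
proof -
  define s where "s k = (\<Sum>i = 1..k. d i)" for k
  have s: "strict_mono_on {..n} s" "s 0 = 0"
    using strict_mono_on_partial_sums[OF assms(2)] by (simp_all add: s_def[abs_def])
  define A where "A = {1..nat (s n)}"
  have "s 0 < s n"
    using assms(1) by (intro strict_mono_onD[OF s(1)]) auto
  then have "1 \<in> A"
    using s(2) by (simp add: A_def)
  let ?U = "(\<lambda>a. 2 * a) ` A" and ?V = "(\<lambda>b. 2 * b + 1) ` A"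
    and ?E = "double_cover_edges A (block_adjacent s n)"
  have "signed_bipartite_graph ?U ?V ?E (\<lambda>_. True)"
    using \<open>1 \<in> A\<close> by (intro signed_bipartite_graph_double_cover) (auto simp: A_def)
  moreover have "sb_connected ?U ?V ?E"
    using block_adjacent_one[OF s]
    by (intro sb_connected_double_cover[OF symp_block_adjacent \<open>1 \<in> A\<close>]) (simp add: A_def)
  moreover have "signed_degree_set ?U ?V ?E (\<lambda>_. True) = s ` {1..n}"
    unfolding signed_degree_set_double_cover[OF symp_block_adjacent] A_def by (rule block_degrees[OF s])
  moreover have "s ` {1..n} = {(\<Sum>i = 1..k. d i) | k. 1 \<le> k \<and> k \<le> n}"
    by (auto simp: s_def)
  ultimately show ?thesis
    by metis
qed

end
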